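(* Let $N\ge2$ and $0=x_0<x_1<\dots<x_N=1$, $I=[0,1]$, $I_i=[x_{i-1},x_i]$, $|I_i|=x_i-x_{i-1}$, $L_i(x)=x_{i-1}+|I_i|x$ for $i=1,\dots,N$. Let $\alpha_i,\beta_i,\gamma_i$ be reals with $|\alpha_i|<1$ and $|\beta_i|+|\gamma_i|<1$, let $p_i\in\mathrm{Lip}\,\lambda_i$ and $q_i\in\mathrm{Lip}\,\mu_i$ with $0<\lambda_i,\mu_i\le1$, and let $f_1,f_2:I\to\mathbb{R}$ be continuous with $f_1(L_i(x))=\alpha_if_1(x)+\beta_if_2(x)+p_i(x)$ and $f_2(L_i(x))=\gamma_if_2(x)+q_i(x)$ for all $x\in I$, $i=1,\dots,N$. Put $\lambda=\min_i\lambda_i$, $\mu=\min_i\mu_i$, $\Omega=\max_i |\alpha_i|/|I_i|^{\lambda}$, $\Gamma=\max_i|\gamma_i|/|I_i|^{\mu}$, $\Theta=\max_i|\alpha_i|/|I_i|^{\mu}$, and suppose $\Theta>1$. Then: (a) if $\Omega\ne1$ and $\Gamma\ne1$, there is $\delta\in(0,1]$ with $f_1\in\mathrm{Lip}\,\delta$; (b) if $\Omega=1$ or $\Gamma=1$, there is $\delta\in(0,1]$ with $\omega(f_1,t)=O(|t|^{\delta}\log|t|)$ as $t\to0$.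
   Context: $\mathrm{Lip}\,\delta$ denotes the class of functions $g$ on $I$ such that $|g(x)-g(y)|\le C|x-y|^{\delta}$ for some constant $C$ and all $x,y\in I$. $\omega(f_1,t)=\sup\{|f_1(x)-f_1(y)|: x,y\in I,\ |x-y|\le |t|\}$ is the modulus of continuity. The function $f_1$ is the coalescence hidden variable fractal interpolation function (CHFIF): $(f_1,f_2)$ is the continuous function whose graph is the attractor of the IFS $\omega_i(x,y,z)=(L_i(x),\alpha_iy+\beta_iz+p_i(x),\gamma_iz+q_i(x))$. *)

theory Defs
  imports "HOL-Analysis.Analysis" "HOL-Library.Landau_Symbols"
begin

definition Lip_on :: "real set \<Rightarrow> real \<Rightarrow> (real \<Rightarrow> real) \<Rightarrow> bool" where
  "Lip_on I \<delta> g \<longleftrightarrow> (\<exists>C. \<forall>x\<in>I. \<forall>y\<in>I. \<bar>g x - g y\<bar> \<le> C * \<bar>x - y\<bar> powr \<delta>)"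

definition modulus :: "real set \<Rightarrow> (real \<Rightarrow> real) \<Rightarrow> real \<Rightarrow> real" where
  "modulus I f t = Sup {\<bar>f x - f y\<bar> | x y. x \<in> I \<and> y \<in> I \<and> \<bar>x - y\<bar> \<le> \<bar>t\<bar>}"

end

theory Submission
  imports Defs "HOL-Real_Asymp.Real_Asymp"
begin

(* f1 is Hoelder continuous with a positive exponent whatever the values of \<Omega>, \<Gamma> and \<Theta>, and (b) follows from this because |ln |t|| \<ge> 1 near 0.

   The key fact is that a continuous g with g(L_i t) = a_i g(t) + r_i(t), |a_i| < 1 and every r_i
   Hoelder of exponent e > 0, is Hoelder: with c \<le> |I_i| and max(|a_i|, c^e) < \<theta> < 1, induction
   on n bounds |g s - g t| for |s - t| \<le> c^n by a multiple of \<theta>^n.  Two points of one piece I_i are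
   pulled back by L_i; two points on either side of a partition point x_i are compared with
   x_i = L_i(1) = L_(i+1)(0), and 1 and 0 are the fixed points of L_N and L_1, near which the same
   induction controls g.  This applies first to f2 (r_i = q_i) and then to f1 (r_i = \<beta>_i f2 + p_i). *)

lemma power_powr_swap:
  fixes c e :: real
  assumes "0 \<le> c"
  shows "(c ^ n) powr e = (c powr e) ^ n"
  using assms by (induction n) (auto simp: powr_mult)

lemma geometric_scale_bracket:
  fixes c h :: real
  assumes "0 < c" "c < 1" "0 < h" "h \<le> 1"
  obtains n where "c ^ Suc n < h" "h \<le> c ^ n"
proof -
  obtain m where "c ^ m < h"
    using real_arch_pow_inv assms by blast
  then obtain k where k: "\<forall>i<k. \<not> c ^ i < h" "c ^ k < h"
    using ex_least_nat_le[of "\<lambda>k. c ^ k < h"] by blast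
  have "k \<noteq> 0"
    using k(2) assms(4) by (cases k) auto
  then have "c ^ Suc (k - 1) < h" "h \<le> c ^ (k - 1)"
    using k by (simp_all add: not_less)
  then show thesis
    by (rule that)
qed

lemma Lip_on_iff_nonneg_const:
  "Lip_on I d g \<longleftrightarrow> (\<exists>C\<ge>0. \<forall>x\<in>I. \<forall>y\<in>I. \<bar>g x - g y\<bar> \<le> C * \<bar>x - y\<bar> powr d)"
proof
  assume "Lip_on I d g"
  then obtain C where C: "\<forall>x\<in>I. \<forall>y\<in>I. \<bar>g x - g y\<bar> \<le> C * \<bar>x - y\<bar> powr d"
    unfolding Lip_on_def by blast
  have "\<bar>g x - g y\<bar> \<le> max C 0 * \<bar>x - y\<bar> powr d" if "x \<in> I" "y \<in> I" for x y
  proof -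
    have "C * \<bar>x - y\<bar> powr d \<le> max C 0 * \<bar>x - y\<bar> powr d"
      by (intro mult_right_mono) auto
    with C that show ?thesis
      by (meson order_trans)
  qed
  then show "\<exists>C\<ge>0. \<forall>x\<in>I. \<forall>y\<in>I. \<bar>g x - g y\<bar> \<le> C * \<bar>x - y\<bar> powr d"
    by (intro exI[of _ "max C 0"]) auto
qed (auto simp: Lip_on_def)

lemma Lip_on_exponent_mono:
  assumes "Lip_on I d g" "e \<le> d" and diam: "\<forall>x\<in>I. \<forall>y\<in>I. \<bar>x - y\<bar> \<le> 1"
  shows "Lip_on I e g"
proof -
  obtain C where "0 \<le> C" and C: "\<forall>x\<in>I. \<forall>y\<in>I. \<bar>g x - g y\<bar> \<le> C * \<bar>x - y\<bar> powr d"
    using assms(1) by (auto simp: Lip_on_iff_nonneg_const)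
  have "\<bar>g x - g y\<bar> \<le> C * \<bar>x - y\<bar> powr e" if "x \<in> I" "y \<in> I" for x y
  proof -
    have "C * \<bar>x - y\<bar> powr d \<le> C * \<bar>x - y\<bar> powr e"
      using \<open>0 \<le> C\<close> assms(2) diam that by (intro mult_left_mono powr_mono') auto
    with C that show ?thesis
      by (meson order_trans)
  qed
  then show ?thesis
    unfolding Lip_on_def by blast
qed

lemma Lip_on_add:
  assumes "Lip_on I d f" "Lip_on I d g"
  shows "Lip_on I d (\<lambda>x. f x + g x)"
proof -
  obtain C D where C: "\<forall>x\<in>I. \<forall>y\<in>I. \<bar>f x - f y\<bar> \<le> C * \<bar>x - y\<bar> powr d"
    and D: "\<forall>x\<in>I. \<forall>y\<in>I. \<bar>g x - g y\<bar> \<le> D * \<bar>x - y\<bar> powr d"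
    using assms unfolding Lip_on_def by blast
  have "\<bar>(f x + g x) - (f y + g y)\<bar> \<le> (C + D) * \<bar>x - y\<bar> powr d" if "x \<in> I" "y \<in> I" for x y
    using C D that by (fastforce simp: distrib_right abs_le_iff)
  then show ?thesis
    unfolding Lip_on_def by blast
qed

lemma Lip_on_cmult:
  assumes "Lip_on I d f"
  shows "Lip_on I d (\<lambda>x. c * f x)"
proof -
  obtain C where C: "\<forall>x\<in>I. \<forall>y\<in>I. \<bar>f x - f y\<bar> \<le> C * \<bar>x - y\<bar> powr d"
    using assms unfolding Lip_on_def by blast
  have "\<bar>c * f x - c * f y\<bar> \<le> (\<bar>c\<bar> * C) * \<bar>x - y\<bar> powr d" if "x \<in> I" "y \<in> I" for x y
  proof -
    have "\<bar>c * f x - c * f y\<bar> = \<bar>c\<bar> * \<bar>f x - f y\<bar>"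
      by (simp add: abs_mult flip: right_diff_distrib)
    also have "\<dots> \<le> \<bar>c\<bar> * (C * \<bar>x - y\<bar> powr d)"
      using C that by (intro mult_left_mono) auto
    finally show ?thesis
      by (simp add: mult.assoc)
  qed
  then show ?thesis
    unfolding Lip_on_def by blast
qed

lemma Lip_on_uniform_const:
  assumes "finite A" "\<forall>i\<in>A. Lip_on I d (f i)"
  shows "\<exists>K\<ge>0. \<forall>i\<in>A. \<forall>x\<in>I. \<forall>y\<in>I. \<bar>f i x - f i y\<bar> \<le> K * \<bar>x - y\<bar> powr d"
proof -
  obtain C where C: "\<forall>i\<in>A. 0 \<le> C i \<and> (\<forall>x\<in>I. \<forall>y\<in>I. \<bar>f i x - f i y\<bar> \<le> C i * \<bar>x - y\<bar> powr d)"
    using assms(2) unfolding Lip_on_iff_nonneg_const by metis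
  have "\<bar>f i x - f i y\<bar> \<le> sum C A * \<bar>x - y\<bar> powr d" if "i \<in> A" "x \<in> I" "y \<in> I" for i x y
  proof -
    have "C i * \<bar>x - y\<bar> powr d \<le> sum C A * \<bar>x - y\<bar> powr d"
      using C that assms(1) by (intro mult_right_mono member_le_sum) auto
    with C that show ?thesis
      by (meson order_trans)
  qed
  moreover have "0 \<le> sum C A"
    using C by (intro sum_nonneg) auto
  ultimately show ?thesis
    by blast
qed

lemma Lip_on_Min_exponent:
  assumes "finite A" "\<forall>i\<in>A. Lip_on I (d i) (f i)" and "\<forall>x\<in>I. \<forall>y\<in>I. \<bar>x - y\<bar> \<le> 1"
  shows "\<forall>i\<in>A. Lip_on I (Min (d ` A)) (f i)"
  using assms by (auto intro: Lip_on_exponent_mono)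

lemma compact_bounded_oscillation:
  fixes g :: "'a::topological_space \<Rightarrow> real"
  assumes "compact S" "continuous_on S g"
  obtains M where "\<forall>s\<in>S. \<forall>t\<in>S. \<bar>g s - g t\<bar> \<le> M"
proof -
  obtain M where M: "\<forall>t\<in>S. \<bar>g t\<bar> \<le> M"
    using compact_imp_bounded[OF compact_continuous_image[OF assms(2,1)]]
    unfolding bounded_real by auto
  have "\<bar>g s - g t\<bar> \<le> 2 * M" if "s \<in> S" "t \<in> S" for s t
  proof -
    have "\<bar>g s\<bar> \<le> M" "\<bar>g t\<bar> \<le> M"
      using M that by auto
    then show ?thesis
      using abs_triangle_ineq4[of "g s" "g t"] by linarith
  qed
  with that show thesis
    by blast
qed

lemma ex_exponent_powr_ge:
  fixes c \<theta> :: real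
  assumes c: "0 < c" "c < 1" and \<theta>: "0 < \<theta>" "\<theta> < 1"
  shows "\<exists>\<delta>. 0 < \<delta> \<and> \<delta> \<le> 1 \<and> \<theta> \<le> c powr \<delta>"
proof (intro exI conjI)
  let ?\<delta> = "min 1 (ln \<theta> / ln c)"
  have "ln c < 0"
    using c by simp
  show "0 < ?\<delta>"
    using c \<theta> by (simp add: divide_neg_neg)
  show "?\<delta> \<le> 1"
    by simp
  have "ln \<theta> \<le> ?\<delta> * ln c"
  proof (cases "1 \<le> ln \<theta> / ln c")
    case True
    then have "ln \<theta> \<le> ln c"
      using \<open>ln c < 0\<close> by (simp add: le_divide_eq_1_neg)
    with True show ?thesis
      by simp
  next
    case False
    with \<open>ln c < 0\<close> show ?thesis
      by simp
  qed
  then have "exp (ln \<theta>) \<le> exp (?\<delta> * ln c)"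
    by simp
  then show "\<theta> \<le> c powr ?\<delta>"
    using c \<theta> by (simp add: powr_def)
qed

lemma Lip_on_of_geometric_oscillation:
  fixes c \<theta> C :: real
  assumes c: "0 < c" "c < 1" and \<theta>: "0 < \<theta>" "\<theta> < 1"
    and diam: "\<forall>s\<in>I. \<forall>t\<in>I. \<bar>s - t\<bar> \<le> 1"
    and osc: "\<And>n s t. s \<in> I \<Longrightarrow> t \<in> I \<Longrightarrow> \<bar>s - t\<bar> \<le> c ^ n \<Longrightarrow> \<bar>g s - g t\<bar> \<le> C * \<theta> ^ n"
  shows "\<exists>\<delta>. 0 < \<delta> \<and> \<delta> \<le> 1 \<and> Lip_on I \<delta> g"
proof -
  obtain \<delta> where \<delta>: "0 < \<delta>" "\<delta> \<le> 1" "\<theta> \<le> c powr \<delta>"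
    using ex_exponent_powr_ge[OF c \<theta>] by blast
  have "\<bar>g s - g t\<bar> \<le> C / \<theta> * \<bar>s - t\<bar> powr \<delta>" if st: "s \<in> I" "t \<in> I" for s t
  proof (cases "s = t")
    case False
    then have "0 < \<bar>s - t\<bar>" "\<bar>s - t\<bar> \<le> 1"
      using diam st by auto
    then obtain n where n: "c ^ Suc n < \<bar>s - t\<bar>" "\<bar>s - t\<bar> \<le> c ^ n"
      by (rule geometric_scale_bracket[OF c])
    have "0 \<le> C"
      using osc[of s s 0] st by simp
    have "\<bar>g s - g t\<bar> \<le> C * \<theta> ^ n"
      using osc[OF st n(2)] .
    also have "\<dots> = C / \<theta> * \<theta> ^ Suc n"
      using \<theta> by simp
    also have "\<dots> \<le> C / \<theta> * (c powr \<delta>) ^ Suc n"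
      using \<theta> \<delta> \<open>0 \<le> C\<close> by (intro mult_left_mono power_mono) auto
    also have "\<dots> = C / \<theta> * (c ^ Suc n) powr \<delta>"
      using c by (simp only: power_powr_swap less_imp_le)
    also have "\<dots> \<le> C / \<theta> * \<bar>s - t\<bar> powr \<delta>"
      using \<theta> c n \<delta> \<open>0 \<le> C\<close> by (intro mult_left_mono powr_mono2) auto
    finally show ?thesis .
  qed simp
  then have "Lip_on I \<delta> g"
    unfolding Lip_on_def by blast
  with \<delta> show ?thesis
    by blast
qed

lemma Lip_on_modulus_bigo:
  assumes "I \<noteq> {}" "0 \<le> d" "Lip_on I d g"
  shows "modulus I g \<in> O[at 0](\<lambda>t. \<bar>t\<bar> powr d)"
proof -
  obtain C where "0 \<le> C" and C: "\<forall>x\<in>I. \<forall>y\<in>I. \<bar>g x - g y\<bar> \<le> C * \<bar>x - y\<bar> powr d"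
    using assms(3) by (auto simp: Lip_on_iff_nonneg_const)
  have "\<bar>modulus I g t\<bar> \<le> C * \<bar>t\<bar> powr d" for t
  proof -
    define S where "S = {\<bar>g x - g y\<bar> | x y. x \<in> I \<and> y \<in> I \<and> \<bar>x - y\<bar> \<le> \<bar>t\<bar>}"
    have ub: "s \<le> C * \<bar>t\<bar> powr d" if s: "s \<in> S" for s
    proof -
      obtain x y where xy: "s = \<bar>g x - g y\<bar>" "x \<in> I" "y \<in> I" "\<bar>x - y\<bar> \<le> \<bar>t\<bar>"
        using s unfolding S_def by blast
      then have "C * \<bar>x - y\<bar> powr d \<le> C * \<bar>t\<bar> powr d"
        using \<open>0 \<le> C\<close> assms(2) by (intro mult_left_mono powr_mono2) auto
      with C xy show ?thesis
        by (meson order_trans)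
    qed
    obtain z where "z \<in> I"
      using assms(1) by blast
    then have "0 \<in> S"
      unfolding S_def by force
    have "modulus I g t = Sup S"
      by (simp add: modulus_def S_def)
    moreover have "0 \<le> Sup S"
      using \<open>0 \<in> S\<close> ub by (intro cSup_upper bdd_aboveI) auto
    moreover have "Sup S \<le> C * \<bar>t\<bar> powr d"
      using \<open>0 \<in> S\<close> ub by (intro cSup_least) auto
    ultimately show ?thesis
      by simp
  qed
  then show ?thesis
    by (intro bigoI[of _ C] always_eventually) auto
qed

lemma powr_bigo_powr_ln_at_0: "(\<lambda>t::real. \<bar>t\<bar> powr d) \<in> O[at 0](\<lambda>t. \<bar>t\<bar> powr d * ln \<bar>t\<bar>)"
  by real_asymp

locale self_affine_function =
  fixes N :: nat and x :: "nat \<Rightarrow> real" and a :: "nat \<Rightarrow> real"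
    and r :: "nat \<Rightarrow> real \<Rightarrow> real" and e :: real and g :: "real \<Rightarrow> real"
  assumes N_pos: "1 \<le> N" and x_0: "x 0 = 0" and x_N: "x N = 1"
    and x_less: "\<forall>i<N. x i < x (Suc i)"
    and a_less_1: "\<forall>i\<in>{1..N}. \<bar>a i\<bar> < 1"
    and e_pos: "0 < e"
    and r_Lip: "\<forall>i\<in>{1..N}. Lip_on {0..1} e (r i)"
    and g_cont: "continuous_on {0..1} g"
    and g_eq: "\<forall>i\<in>{1..N}. \<forall>t\<in>{0..1}. g (x (i - 1) + (x i - x (i - 1)) * t) = a i * g t + r i t"
begin

definition L :: "nat \<Rightarrow> real \<Rightarrow> real" where
  "L i t = x (i - 1) + (x i - x (i - 1)) * t"

lemma L_0 [simp]: "L i 0 = x (i - 1)"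
  and L_1 [simp]: "L i 1 = x i"
  by (simp_all add: L_def)

lemma g_L: "i \<in> {1..N} \<Longrightarrow> t \<in> {0..1} \<Longrightarrow> g (L i t) = a i * g t + r i t"
  using g_eq by (simp add: L_def)

lemma x_mono: "i \<le> j \<Longrightarrow> j \<le> N \<Longrightarrow> x i \<le> x j"
  by (rule lift_Suc_mono_le_ivl[of "{..<N}"]) (use x_less in \<open>auto intro: less_imp_le\<close>)

lemma piece_length_pos: "i \<in> {1..N} \<Longrightarrow> 0 < x i - x (i - 1)"
  using x_less[rule_format, of "i - 1"] by auto

lemma piece_length_le_1:
  assumes "i \<in> {1..N}"
  shows "x i - x (i - 1) \<le> 1"
proof -
  have "x 0 \<le> x (i - 1)" "x i \<le> x N"
    using assms by (auto intro: x_mono)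
  then show ?thesis
    using x_0 x_N by simp
qed

lemma dist_L: "i \<in> {1..N} \<Longrightarrow> \<bar>L i u - L i v\<bar> = (x i - x (i - 1)) * \<bar>u - v\<bar>"
  using piece_length_pos[of i] by (simp add: L_def abs_mult flip: right_diff_distrib)

lemma piece_image:
  assumes i: "i \<in> {1..N}" and t: "x (i - 1) \<le> t" "t \<le> x i"
  obtains u where "u \<in> {0..1}" "t = L i u"
proof
  show "(t - x (i - 1)) / (x i - x (i - 1)) \<in> {0..1}"
    using piece_length_pos[OF i] t by (auto simp: divide_simps)
  show "t = L i ((t - x (i - 1)) / (x i - x (i - 1)))"
    using piece_length_pos[OF i] by (simp add: L_def)
qed

lemma piece_cover:
  assumes "t \<in> {0..1}"
  obtains i where "i \<in> {1..N}" "x (i - 1) \<le> t" "t \<le> x i"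
proof -
  obtain k where k: "k \<le> N" "\<forall>j<k. \<not> t \<le> x j" "t \<le> x k"
    using ex_least_nat_le[of "\<lambda>k. t \<le> x k" N] assms x_N by auto
  show thesis
  proof (cases "k = 0")
    case True
    then show thesis
      using that[of 1] k assms x_0 x_mono[of 0 1] N_pos by auto
  next
    case False
    then have "x (k - 1) < t"
      using k(2)[rule_format, of "k - 1"] by simp
    with False show thesis
      using that[of k] k by simp
  qed
qed

context
  fixes A K c \<theta> B :: real
  assumes a_le_A: "\<forall>i\<in>{1..N}. \<bar>a i\<bar> \<le> A"
    and r_bound: "\<forall>i\<in>{1..N}. \<forall>u\<in>{0..1}. \<forall>v\<in>{0..1}. \<bar>r i u - r i v\<bar> \<le> K * \<bar>u - v\<bar> powr e"
    and c_pos: "0 < c" and c_le_piece_length: "\<forall>i\<in>{1..N}. c \<le> x i - x (i - 1)"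
    and c_powr_le: "c powr e \<le> \<theta>"
    and contraction: "A * B + K \<le> B * \<theta>"
    and osc_le_B: "\<forall>s\<in>{0..1}. \<forall>t\<in>{0..1}. \<bar>g s - g t\<bar> \<le> B"
begin

lemma K_nonneg: "0 \<le> K"
  using r_bound[rule_format, of 1 1 0] N_pos by simp

lemma theta_nonneg: "0 \<le> \<theta>"
  by (rule order_trans[OF powr_ge_zero c_powr_le])

lemma c_power_Suc_le: "c ^ Suc n \<le> c"
proof -
  have "c \<le> 1"
    using c_le_piece_length[rule_format, of N] piece_length_le_1[of N] N_pos by simp
  then show ?thesis
    using c_pos by (simp add: mult_left_le power_le_one)
qed

lemma contraction_power: "A * (B * \<theta> ^ n) + K * \<theta> ^ n \<le> B * \<theta> ^ Suc n"
  using mult_right_mono[OF contraction, of "\<theta> ^ n"] theta_nonneg by (simp add: algebra_simps)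

lemma dist_preimage_L:
  assumes i: "i \<in> {1..N}" and "\<bar>L i u - L i v\<bar> \<le> c ^ Suc n"
  shows "\<bar>u - v\<bar> \<le> c ^ n"
proof -
  have "c ^ Suc n \<le> (x i - x (i - 1)) * c ^ n"
    using c_le_piece_length i c_pos by (simp add: mult_right_mono)
  with assms have "(x i - x (i - 1)) * \<bar>u - v\<bar> \<le> (x i - x (i - 1)) * c ^ n"
    by (simp add: dist_L)
  then show ?thesis
    using piece_length_pos[OF i] by simp
qed

lemma osc_image_L:
  assumes i: "i \<in> {1..N}" and uv: "u \<in> {0..1}" "v \<in> {0..1}" "\<bar>u - v\<bar> \<le> c ^ n"
    and D: "\<bar>g u - g v\<bar> \<le> D"
  shows "\<bar>g (L i u) - g (L i v)\<bar> \<le> A * D + K * \<theta> ^ n"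
proof -
  have "\<bar>r i u - r i v\<bar> \<le> K * \<bar>u - v\<bar> powr e"
    using r_bound i uv by blast
  also have "\<dots> \<le> K * (c ^ n) powr e"
    using K_nonneg e_pos uv by (intro mult_left_mono powr_mono2) auto
  also have "\<dots> \<le> K * \<theta> ^ n"
    using c_pos c_powr_le K_nonneg by (simp add: power_powr_swap mult_left_mono power_mono)
  finally have r: "\<bar>r i u - r i v\<bar> \<le> K * \<theta> ^ n" .
  have "\<bar>a i\<bar> * \<bar>g u - g v\<bar> \<le> A * D"
    using a_le_A i D by (meson abs_ge_zero mult_mono order_trans)
  moreover have "g (L i u) - g (L i v) = a i * (g u - g v) + (r i u - r i v)"
    using g_L i uv by (simp add: algebra_simps)
  then have "\<bar>g (L i u) - g (L i v)\<bar> \<le> \<bar>a i\<bar> * \<bar>g u - g v\<bar> + \<bar>r i u - r i v\<bar>"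
    by (metis abs_mult abs_triangle_ineq)
  ultimately show ?thesis
    using r by linarith
qed

lemma osc_near_fixed_end:
  assumes j: "j \<in> {1..N}" and z: "z \<in> {0..1}" "L j z = z"
    and near: "\<And>t. t \<in> {0..1} \<Longrightarrow> \<bar>t - z\<bar> \<le> c \<Longrightarrow> x (j - 1) \<le> t \<and> t \<le> x j"
  shows "t \<in> {0..1} \<Longrightarrow> \<bar>t - z\<bar> \<le> c ^ n \<Longrightarrow> \<bar>g t - g z\<bar> \<le> B * \<theta> ^ n"
proof (induction n arbitrary: t)
  case 0
  then show ?case
    using osc_le_B z by simp
next
  case (Suc n)
  then have "x (j - 1) \<le> t \<and> t \<le> x j"
    using near c_power_Suc_le order_trans by blast
  then obtain u where u: "u \<in> {0..1}" "t = L j u"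
    using piece_image j by blast
  then have "\<bar>u - z\<bar> \<le> c ^ n"
    using dist_preimage_L[OF j, of u z] Suc.prems z by simp
  with Suc.IH u have "\<bar>g u - g z\<bar> \<le> B * \<theta> ^ n"
    by blast
  from osc_image_L[OF j u(1) z(1) \<open>\<bar>u - z\<bar> \<le> c ^ n\<close> this]
  show ?case
    using u z contraction_power[of n] by simp
qed

lemma osc_near_end:
  assumes "z \<in> {0, 1}" "t \<in> {0..1}" "\<bar>t - z\<bar> \<le> c ^ n"
  shows "\<bar>g t - g z\<bar> \<le> B * \<theta> ^ n"
proof -
  have "1 \<in> {1..N}" "N \<in> {1..N}"
    using N_pos by auto
  then have "c \<le> x 1" "c \<le> 1 - x (N - 1)"
    using c_le_piece_length x_0 x_N by force+
  then show ?thesis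
    using assms x_0 x_N \<open>1 \<in> {1..N}\<close> \<open>N \<in> {1..N}\<close>
    by (auto intro: osc_near_fixed_end[of 1 0] osc_near_fixed_end[of N 1])
qed

lemma osc_near_piece_end:
  assumes i: "i \<in> {1..N}" and z: "z \<in> {0, 1}" and u: "u \<in> {0..1}"
    and "\<bar>L i u - L i z\<bar> \<le> c ^ Suc n"
  shows "\<bar>g (L i u) - g (L i z)\<bar> \<le> B * \<theta> ^ Suc n"
proof -
  have "\<bar>u - z\<bar> \<le> c ^ n"
    using dist_preimage_L assms by blast
  moreover from this have "\<bar>g u - g z\<bar> \<le> B * \<theta> ^ n"
    using osc_near_end z u by blast
  moreover have "z \<in> {0..1}"
    using z by auto
  ultimately have "\<bar>g (L i u) - g (L i z)\<bar> \<le> A * (B * \<theta> ^ n) + K * \<theta> ^ n"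
    using osc_image_L i u by blast
  then show ?thesis
    using contraction_power[of n] by linarith
qed

lemma osc_within_piece:
  assumes IH: "\<And>u v. u \<in> {0..1} \<Longrightarrow> v \<in> {0..1} \<Longrightarrow> \<bar>u - v\<bar> \<le> c ^ n \<Longrightarrow> \<bar>g u - g v\<bar> \<le> 2 * B * \<theta> ^ n"
    and i: "i \<in> {1..N}" and uv: "u \<in> {0..1}" "v \<in> {0..1}" and "\<bar>L i u - L i v\<bar> \<le> c ^ Suc n"
  shows "\<bar>g (L i u) - g (L i v)\<bar> \<le> 2 * B * \<theta> ^ Suc n"
proof -
  have "\<bar>u - v\<bar> \<le> c ^ n"
    using dist_preimage_L i assms(5) by blast
  with IH uv have "\<bar>g u - g v\<bar> \<le> 2 * B * \<theta> ^ n"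
    by blast
  from osc_image_L[OF i uv \<open>\<bar>u - v\<bar> \<le> c ^ n\<close> this]
  have "\<bar>g (L i u) - g (L i v)\<bar> \<le> 2 * (A * (B * \<theta> ^ n)) + K * \<theta> ^ n"
    by (simp add: mult.assoc mult.left_commute)
  moreover have "0 \<le> K * \<theta> ^ n"
    using K_nonneg theta_nonneg by simp
  ultimately show ?thesis
    using contraction_power[of n] by linarith
qed

lemma osc_across_partition_point:
  assumes i: "i \<in> {1..N}" "i < N" and uv: "u \<in> {0..1}" "v \<in> {0..1}"
    and "\<bar>L i u - x i\<bar> \<le> c ^ Suc n" "\<bar>L (Suc i) v - x i\<bar> \<le> c ^ Suc n"
  shows "\<bar>g (L i u) - g (L (Suc i) v)\<bar> \<le> 2 * B * \<theta> ^ Suc n"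
proof -
  have "\<bar>g (L i u) - g (x i)\<bar> \<le> B * \<theta> ^ Suc n"
    using osc_near_piece_end[OF i(1), of 1 u n] uv assms(5) by simp
  moreover have "\<bar>g (L (Suc i) v) - g (x i)\<bar> \<le> B * \<theta> ^ Suc n"
    using osc_near_piece_end[of "Suc i" 0 v n] i uv assms(6) by simp
  ultimately show ?thesis
    by (simp add: abs_le_iff)
qed

lemma osc_step:
  assumes IH: "\<And>u v. u \<in> {0..1} \<Longrightarrow> v \<in> {0..1} \<Longrightarrow> \<bar>u - v\<bar> \<le> c ^ n \<Longrightarrow> \<bar>g u - g v\<bar> \<le> 2 * B * \<theta> ^ n"
    and st: "s \<in> {0..1}" "t \<in> {0..1}" "s \<le> t" "t - s \<le> c ^ Suc n"
  shows "\<bar>g s - g t\<bar> \<le> 2 * B * \<theta> ^ Suc n"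
proof -
  obtain i where i: "i \<in> {1..N}" "x (i - 1) \<le> s" "s \<le> x i"
    using piece_cover st(1) by blast
  obtain u where u: "u \<in> {0..1}" "s = L i u"
    using piece_image i by blast
  show ?thesis
  proof (cases "t \<le> x i")
    case True
    moreover have "x (i - 1) \<le> t"
      using i(2) st(3) by linarith
    ultimately obtain v where v: "v \<in> {0..1}" "t = L i v"
      using piece_image[OF i(1)] by blast
    show ?thesis
      using osc_within_piece[OF IH i(1) u(1) v(1)] u(2) v(2) st(3,4) by simp
  next
    case False
    then have "i < N"
      using st(2) x_N i(1) by (cases "i = N") auto
    then have j: "Suc i \<in> {1..N}"
      by simp
    have "t \<le> x (Suc i)"
      using st i c_le_piece_length[rule_format, OF j] c_power_Suc_le[of n] by simp
    moreover have "x (Suc i - 1) \<le> t"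
      using False by simp
    ultimately obtain v where v: "v \<in> {0..1}" "t = L (Suc i) v"
      using piece_image[OF j] by blast
    show ?thesis
      using osc_across_partition_point[OF i(1) \<open>i < N\<close> u(1) v(1)] u(2) v(2) st(3,4) i(3) False
      by simp
  qed
qed

lemma osc_geometric_bound:
  "s \<in> {0..1} \<Longrightarrow> t \<in> {0..1} \<Longrightarrow> \<bar>s - t\<bar> \<le> c ^ n \<Longrightarrow> \<bar>g s - g t\<bar> \<le> 2 * B * \<theta> ^ n"
proof (induction n arbitrary: s t)
  case 0
  then have "\<bar>g s - g t\<bar> \<le> B"
    using osc_le_B by blast
  moreover have "0 \<le> B"
    using osc_le_B[rule_format, of 0 0] by simp
  ultimately show ?case
    by simp
next
  case (Suc n)
  show ?case
  proof (cases "s \<le> t")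
    case True
    then show ?thesis
      using osc_step[OF Suc.IH, of s t] Suc.prems by simp
  next
    case False
    then have "\<bar>g t - g s\<bar> \<le> 2 * B * \<theta> ^ Suc n"
      using osc_step[OF Suc.IH, of t s] Suc.prems by simp
    then show ?thesis
      by (simp only: abs_minus_commute)
  qed
qed

end

lemma ex_Lip_on_exponent: "\<exists>\<delta>. 0 < \<delta> \<and> \<delta> \<le> 1 \<and> Lip_on {0..1} \<delta> g"
proof -
  have pieces: "finite {1..N}" "{1..N} \<noteq> {}"
    using N_pos by auto
  obtain K where K: "\<forall>i\<in>{1..N}. \<forall>u\<in>{0..1}. \<forall>v\<in>{0..1}. \<bar>r i u - r i v\<bar> \<le> K * \<bar>u - v\<bar> powr e"
    using Lip_on_uniform_const[OF pieces(1) r_Lip] by blast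
  define A where "A = Max ((\<lambda>i. \<bar>a i\<bar>) ` {1..N})"
  have A: "A < 1" "\<forall>i\<in>{1..N}. \<bar>a i\<bar> \<le> A"
    using a_less_1 pieces by (auto simp: A_def)
  \<comment> \<open>the bound 1/2 keeps c < 1 also when there is a single piece\<close>
  define c where "c = min (1/2) (Min ((\<lambda>i. x i - x (i - 1)) ` {1..N}))"
  have c: "0 < c" "c < 1" "\<forall>i\<in>{1..N}. c \<le> x i - x (i - 1)"
    using piece_length_pos pieces by (simp_all add: c_def min.coboundedI2)
  define \<theta> where "\<theta> = (1 + max A (c powr e)) / 2"
  have "c powr e < 1"
    using powr_less_mono2[OF e_pos, of c 1] c by simp
  moreover have "0 \<le> max A (c powr e)"
    by (simp add: le_max_iff_disj)
  ultimately have \<theta>: "A < \<theta>" "c powr e \<le> \<theta>" "0 < \<theta>" "\<theta> < 1"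
    using A by (auto simp: \<theta>_def)
  obtain M where M: "\<forall>s\<in>{0..1}. \<forall>t\<in>{0..1}. \<bar>g s - g t\<bar> \<le> M"
    using compact_bounded_oscillation[OF compact_Icc g_cont] by blast
  define B where "B = max M (K / (\<theta> - A))"
  have "K \<le> B * (\<theta> - A)"
    using \<theta>(1) pos_divide_le_eq[of "\<theta> - A" K B] by (simp add: B_def)
  then have "A * B + K \<le> B * \<theta>"
    by (simp add: algebra_simps)
  moreover have "\<forall>s\<in>{0..1}. \<forall>t\<in>{0..1}. \<bar>g s - g t\<bar> \<le> B"
    using M by (force simp: B_def)
  ultimately have "\<bar>g s - g t\<bar> \<le> 2 * B * \<theta> ^ n"
    if "s \<in> {0..1}" "t \<in> {0..1}" "\<bar>s - t\<bar> \<le> c ^ n" for n s t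
    using osc_geometric_bound[OF A(2) K c(1) c(3) \<theta>(2)] that by blast
  then show ?thesis
    by (intro Lip_on_of_geometric_oscillation[OF c(1,2) \<theta>(3,4)]) auto
qed

end

lemma Lip_on_coalescence_component:
  fixes x \<alpha> \<beta> \<gamma> lam mu :: "nat \<Rightarrow> real" and p q :: "nat \<Rightarrow> real \<Rightarrow> real"
    and f1 f2 :: "real \<Rightarrow> real"
  assumes N_pos: "1 \<le> N" and x0: "x 0 = 0" and xN: "x N = 1"
    and xinc: "\<forall>i<N. x i < x (Suc i)"
    and alpha: "\<forall>i\<in>{1..N}. \<bar>\<alpha> i\<bar> < 1" and gamma: "\<forall>i\<in>{1..N}. \<bar>\<gamma> i\<bar> < 1"
    and lam: "\<forall>i\<in>{1..N}. 0 < lam i" and mu: "\<forall>i\<in>{1..N}. 0 < mu i"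
    and pLip: "\<forall>i\<in>{1..N}. Lip_on {0..1} (lam i) (p i)"
    and qLip: "\<forall>i\<in>{1..N}. Lip_on {0..1} (mu i) (q i)"
    and f1c: "continuous_on {0..1} f1" and f2c: "continuous_on {0..1} f2"
    and eq1: "\<forall>i\<in>{1..N}. \<forall>t\<in>{0..1}.
       f1 (x (i - 1) + (x i - x (i - 1)) * t) = \<alpha> i * f1 t + \<beta> i * f2 t + p i t"
    and eq2: "\<forall>i\<in>{1..N}. \<forall>t\<in>{0..1}.
       f2 (x (i - 1) + (x i - x (i - 1)) * t) = \<gamma> i * f2 t + q i t"
  shows "\<exists>\<delta>. 0 < \<delta> \<and> \<delta> \<le> 1 \<and> Lip_on {0..1} \<delta> f1"
proof -
  have pieces: "finite {1..N}" "{1..N} \<noteq> {}"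
    using N_pos by auto
  have unit_diam: "\<forall>s\<in>{0..1::real}. \<forall>t\<in>{0..1}. \<bar>s - t\<bar> \<le> 1"
    by auto
  have "0 < Min (mu ` {1..N})"
    using mu pieces by simp
  moreover have "\<forall>i\<in>{1..N}. Lip_on {0..1} (Min (mu ` {1..N})) (q i)"
    using Lip_on_Min_exponent[OF pieces(1) qLip unit_diam] .
  ultimately interpret f2: self_affine_function N x \<gamma> q "Min (mu ` {1..N})" f2
    using N_pos x0 xN xinc gamma f2c eq2 by unfold_locales
  obtain \<delta>2 where \<delta>2: "0 < \<delta>2" "Lip_on {0..1} \<delta>2 f2"
    using f2.ex_Lip_on_exponent by blast
  define e where "e = min \<delta>2 (Min (lam ` {1..N}))"
  have "0 < e"
    using \<delta>2 lam pieces by (simp add: e_def)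
  have "Lip_on {0..1} e f2"
    using Lip_on_exponent_mono[OF \<delta>2(2) _ unit_diam] by (simp add: e_def)
  moreover have "\<forall>i\<in>{1..N}. Lip_on {0..1} e (p i)"
    using Lip_on_Min_exponent[OF pieces(1) pLip unit_diam] unit_diam
    by (auto simp: e_def intro: Lip_on_exponent_mono)
  ultimately have "\<forall>i\<in>{1..N}. Lip_on {0..1} e (\<lambda>t. \<beta> i * f2 t + p i t)"
    by (auto intro: Lip_on_add Lip_on_cmult)
  moreover have "\<forall>i\<in>{1..N}. \<forall>t\<in>{0..1}.
      f1 (x (i - 1) + (x i - x (i - 1)) * t) = \<alpha> i * f1 t + (\<beta> i * f2 t + p i t)"
    using eq1 by (simp add: add.assoc)
  ultimately interpret f1: self_affine_function N x \<alpha> "\<lambda>i t. \<beta> i * f2 t + p i t" e f1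
    using N_pos x0 xN xinc alpha \<open>0 < e\<close> f1c by unfold_locales
  show ?thesis
    using f1.ex_Lip_on_exponent .
qed

theorem theorem3p3:
  fixes N :: nat and x :: "nat \<Rightarrow> real"
    and \<alpha> \<beta> \<gamma> :: "nat \<Rightarrow> real"
    and p q :: "nat \<Rightarrow> real \<Rightarrow> real"
    and lam mu :: "nat \<Rightarrow> real"
    and f1 f2 :: "real \<Rightarrow> real"
  assumes N2: "N \<ge> 2"
    and x0: "x 0 = 0" and xN: "x N = 1"
    and xinc: "\<forall>i<N. x i < x (Suc i)"
    and alpha: "\<forall>i\<in>{1..N}. \<bar>\<alpha> i\<bar> < 1"
    and betagamma: "\<forall>i\<in>{1..N}. \<bar>\<beta> i\<bar> + \<bar>\<gamma> i\<bar> < 1"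
    and lam: "\<forall>i\<in>{1..N}. 0 < lam i \<and> lam i \<le> 1"
    and mu: "\<forall>i\<in>{1..N}. 0 < mu i \<and> mu i \<le> 1"
    and pLip: "\<forall>i\<in>{1..N}. Lip_on {0..1} (lam i) (p i)"
    and qLip: "\<forall>i\<in>{1..N}. Lip_on {0..1} (mu i) (q i)"
    and f1c: "continuous_on {0..1} f1" and f2c: "continuous_on {0..1} f2"
    and eq1: "\<forall>i\<in>{1..N}. \<forall>t\<in>{0..1}.
       f1 (x (i - 1) + (x i - x (i - 1)) * t) = \<alpha> i * f1 t + \<beta> i * f2 t + p i t"
    and eq2: "\<forall>i\<in>{1..N}. \<forall>t\<in>{0..1}.
       f2 (x (i - 1) + (x i - x (i - 1)) * t) = \<gamma> i * f2 t + q i t"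
  defines "lmin \<equiv> Min (lam ` {1..N})" and "mmin \<equiv> Min (mu ` {1..N})"
  defines "\<Omega> \<equiv> Max ((\<lambda>i. \<bar>\<alpha> i\<bar> / (x i - x (i - 1)) powr lmin) ` {1..N})"
    and "\<Gamma> \<equiv> Max ((\<lambda>i. \<bar>\<gamma> i\<bar> / (x i - x (i - 1)) powr mmin) ` {1..N})"
    and "\<Theta> \<equiv> Max ((\<lambda>i. \<bar>\<alpha> i\<bar> / (x i - x (i - 1)) powr mmin) ` {1..N})"
  assumes Theta: "\<Theta> > 1"
  shows "(\<Omega> \<noteq> 1 \<and> \<Gamma> \<noteq> 1 \<longrightarrow> (\<exists>\<delta>. 0 < \<delta> \<and> \<delta> \<le> 1 \<and> Lip_on {0..1} \<delta> f1))
       \<and> (\<Omega> = 1 \<or> \<Gamma> = 1 \<longrightarrow> (\<exists>\<delta>. 0 < \<delta> \<and> \<delta> \<le> 1 \<and>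
            (\<lambda>t. modulus {0..1} f1 t) \<in> O[at 0](\<lambda>t. \<bar>t\<bar> powr \<delta> * ln \<bar>t\<bar>)))"
proof -
  have "\<forall>i\<in>{1..N}. \<bar>\<gamma> i\<bar> < 1"
    using betagamma by (smt (verit))
  moreover have "1 \<le> N" "\<forall>i\<in>{1..N}. 0 < lam i" "\<forall>i\<in>{1..N}. 0 < mu i"
    using N2 lam mu by auto
  ultimately obtain \<delta> where \<delta>: "0 < \<delta>" "\<delta> \<le> 1" "Lip_on {0..1} \<delta> f1"
    using Lip_on_coalescence_component[OF _ x0 xN xinc alpha _ _ _ pLip qLip f1c f2c eq1 eq2]
    by blast
  then have "modulus {0..1} f1 \<in> O[at 0](\<lambda>t. \<bar>t\<bar> powr \<delta>)"
    by (intro Lip_on_modulus_bigo) auto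
  then have "modulus {0..1} f1 \<in> O[at 0](\<lambda>t. \<bar>t\<bar> powr \<delta> * ln \<bar>t\<bar>)"
    using powr_bigo_powr_ln_at_0 by (rule landau_o.big_trans)
  with \<delta> show ?thesis
    by blast
qed

end
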